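(* Let $n\ge1$, $L_1,L_2,\underline b>0$, and let $(k_p,k_i,k_d)\in(0,\infty)^3$ satisfy $k_p^2>2k_ik_d+\bar k$ and $k_d^2>k_p/\underline b+\bar k$, where $\bar k=(L_1+L_2)(k_p+k_d)/\underline b$. Then the $3n\times3n$ matrix $$P=\begin{bmatrix}2k_ik_p\underline bI_n&2k_ik_d\underline bI_n&k_iI_n\\2k_ik_d\underline bI_n&(2k_pk_d\underline b-k_i)I_n&k_pI_n\\k_iI_n&k_pI_n&k_dI_n\end{bmatrix}$$ is positive definite. Moreover, there exists $\alpha>0$, depending only on $(k_p,k_i,k_d,L_1,L_2,\underline b)$, such that for all $n\times n$ real matrices $a,b,\theta$ with $\|a\|\le L_1$, $\|b\|\le L_2$ and $\mathrm{Sym}[\theta]\ge\underline bI_n$, the matrix $$A=\begin{bmatrix}0_n&I_n&0_n\\0_n&0_n&I_n\\-k_i\theta&a-k_p\theta&b-k_d\theta\end{bmatrix}$$ satisfies $PA+A^{\mathsf T}P\le-\alpha I_{3n}$.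
   Context: $\|\cdot\|$ is the operator norm induced by the Euclidean norm; $\mathrm{Sym}[\theta]=(\theta+\theta^{\mathsf T})/2$; for symmetric matrices, $S_1\ge S_2$ means $S_1-S_2$ is positive semidefinite; $0_n$ and $I_n$ are the $n\times n$ zero and identity matrices. *)

theory Defs
  imports Complex_Main
begin

text \<open>Real matrices of variable dimension, represented as functions on indices;
  only entries with indices below the stated dimension are ever used.\<close>

type_synonym rmat = "nat \<Rightarrow> nat \<Rightarrow> real"
type_synonym rvec = "nat \<Rightarrow> real"

definition mzero :: rmat where "mzero = (\<lambda>i j. 0)"
definition midm :: rmat where "midm = (\<lambda>i j. if i = j then 1 else 0)"
definition madd :: "rmat \<Rightarrow> rmat \<Rightarrow> rmat" where "madd A B = (\<lambda>i j. A i j + B i j)"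
definition msub :: "rmat \<Rightarrow> rmat \<Rightarrow> rmat" where "msub A B = (\<lambda>i j. A i j - B i j)"
definition mscale :: "real \<Rightarrow> rmat \<Rightarrow> rmat" where "mscale c A = (\<lambda>i j. c * A i j)"
definition mtr :: "rmat \<Rightarrow> rmat" where "mtr A = (\<lambda>i j. A j i)"

definition mmul :: "nat \<Rightarrow> rmat \<Rightarrow> rmat \<Rightarrow> rmat" where
  "mmul n A B = (\<lambda>i j. \<Sum>k<n. A i k * B k j)"

definition mvec :: "nat \<Rightarrow> rmat \<Rightarrow> rvec \<Rightarrow> rvec" where
  "mvec n A x = (\<lambda>i. \<Sum>j<n. A i j * x j)"

definition vnorm :: "nat \<Rightarrow> rvec \<Rightarrow> real" where
  "vnorm n x = sqrt (\<Sum>i<n. (x i)^2)"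

definition opnorm :: "nat \<Rightarrow> rmat \<Rightarrow> real" where
  "opnorm n A = Sup {vnorm n (mvec n A x) | x. vnorm n x \<le> 1}"

definition qform :: "nat \<Rightarrow> rmat \<Rightarrow> rvec \<Rightarrow> real" where
  "qform n M x = (\<Sum>i<n. \<Sum>j<n. x i * M i j * x j)"

definition msymmetric :: "nat \<Rightarrow> rmat \<Rightarrow> bool" where
  "msymmetric n M \<longleftrightarrow> (\<forall>i<n. \<forall>j<n. M i j = M j i)"

definition loewner_le :: "nat \<Rightarrow> rmat \<Rightarrow> rmat \<Rightarrow> bool" where
  "loewner_le n S1 S2 \<longleftrightarrow> msymmetric n S1 \<and> msymmetric n S2 \<and>
     (\<forall>x. qform n (msub S2 S1) x \<ge> 0)"

definition pos_def :: "nat \<Rightarrow> rmat \<Rightarrow> bool" where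
  "pos_def n M \<longleftrightarrow> msymmetric n M \<and> (\<forall>x. (\<exists>i<n. x i \<noteq> 0) \<longrightarrow> qform n M x > 0)"

definition msym :: "rmat \<Rightarrow> rmat" where
  "msym T = mscale (1/2) (madd T (mtr T))"

definition block3 :: "nat \<Rightarrow> rmat list list \<Rightarrow> rmat" where
  "block3 n B = (\<lambda>i j. if i < 3*n \<and> j < 3*n
       then (B ! (i div n) ! (j div n)) (i mod n) (j mod n) else 0)"

definition kbar :: "real \<Rightarrow> real \<Rightarrow> real \<Rightarrow> real \<Rightarrow> real \<Rightarrow> real" where
  "kbar L1 L2 bl kp kd = (L1 + L2) * (kp + kd) / bl"

definition Pmat :: "nat \<Rightarrow> real \<Rightarrow> real \<Rightarrow> real \<Rightarrow> real \<Rightarrow> rmat" where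
  "Pmat n kp ki kd bl = block3 n
     [[mscale (2*ki*kp*bl) midm, mscale (2*ki*kd*bl) midm, mscale ki midm],
      [mscale (2*ki*kd*bl) midm, mscale (2*kp*kd*bl - ki) midm, mscale kp midm],
      [mscale ki midm, mscale kp midm, mscale kd midm]]"

definition Amat :: "nat \<Rightarrow> real \<Rightarrow> real \<Rightarrow> real \<Rightarrow> rmat \<Rightarrow> rmat \<Rightarrow> rmat \<Rightarrow> rmat" where
  "Amat n kp ki kd a b \<theta> = block3 n
     [[mzero, midm, mzero],
      [mzero, mzero, midm],
      [mscale (- ki) \<theta>, msub a (mscale kp \<theta>), msub b (mscale kd \<theta>)]]"

end

(* Split z into blocks x1, x2, x3 and put y = ki x1 + kp x2 + kd x3, the last block of P z.
   Multiplying the quadratic form of P by kd completes the square in x3: it becomes y^2 plus a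
   binary form in (x1, x2) whose determinant is positive because kp^2 > 2 ki kd and bl kd^2 > kp.

   For the Lyapunov form, z^T (P A + A^T P) z = 2 <A z, P z>, and the cross terms of the nominal
   part cancel:
     <A z, P z> = <a x2 + b x3, y> - (<y, theta y> - bl |y|^2)
                  - bl ki^2 |x1|^2 - bl (kp^2 - 2 ki kd) |x2|^2 - (bl kd^2 - kp) |x3|^2.
   The bracket is nonnegative since Sym[theta] >= bl I, and by Cauchy-Schwarz the first term is at
   most (L1 |x2| + L2 |x3|) (ki |x1| + kp |x2| + kd |x3|).  Weighted AM-GM absorbs this into the
   diagonal terms, and the gain conditions leave a positive margin in each of them. *)

theory Submission
  imports Defs "HOL-Analysis.L2_Norm"
begin

definition vinner :: "nat \<Rightarrow> rvec \<Rightarrow> rvec \<Rightarrow> real" where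
  "vinner n x y = (\<Sum>i<n. x i * y i)"

lemma qform_madd: "qform n (madd A B) x = qform n A x + qform n B x"
  by (simp add: qform_def madd_def algebra_simps sum.distrib)

lemma qform_msub: "qform n (msub A B) x = qform n A x - qform n B x"
  by (simp add: qform_def msub_def algebra_simps sum_subtractf)

lemma qform_mscale: "qform n (mscale c A) x = c * qform n A x"
  by (simp add: qform_def mscale_def sum_distrib_left mult_ac)

lemma qform_mtr: "qform n (mtr A) x = qform n A x"
  unfolding qform_def mtr_def by (subst sum.swap) (simp add: mult_ac)

lemma qform_msym: "qform n (msym A) x = qform n A x"
  by (simp add: msym_def qform_mscale qform_madd qform_mtr)

lemma mvec_midm:
  assumes "i < n"
  shows "mvec n midm x i = x i"
proof -
  have "(\<Sum>j<n. midm i j * x j) = (\<Sum>j<n. if i = j then x j else 0)"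
    by (rule sum.cong) (auto simp: midm_def)
  then show ?thesis using assms by (simp add: mvec_def)
qed

lemma mvec_mzero: "mvec n mzero x i = 0"
  by (simp add: mvec_def mzero_def)

lemma mvec_mscale: "mvec n (mscale c A) x i = c * mvec n A x i"
  by (simp add: mvec_def mscale_def sum_distrib_left mult_ac)

lemma mvec_msub: "mvec n (msub A B) x i = mvec n A x i - mvec n B x i"
  by (simp add: mvec_def msub_def algebra_simps sum_subtractf)

lemma mvec_mtr_symmetric: "msymmetric n P \<Longrightarrow> i < n \<Longrightarrow> mvec n (mtr P) x i = mvec n P x i"
  by (simp add: mvec_def mtr_def msymmetric_def)

lemma vnorm_eq_L2_set: "vnorm n x = L2_set x {..<n}"
  by (simp add: vnorm_def L2_set_def)

lemma vnorm_nonneg: "0 \<le> vnorm n x"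
  by (simp add: vnorm_eq_L2_set)

lemma vnorm_power2: "vnorm n x ^ 2 = vinner n x x"
  by (simp add: vnorm_def vinner_def sum_nonneg power2_eq_square)

lemma vnorm_add_le: "vnorm n (\<lambda>i. x i + y i) \<le> vnorm n x + vnorm n y"
  unfolding vnorm_eq_L2_set by (rule L2_set_triangle_ineq)

lemma vnorm_scale: "vnorm n (\<lambda>i. c * x i) = \<bar>c\<bar> * vnorm n x"
  by (simp add: vnorm_def power_mult_distrib real_sqrt_mult flip: sum_distrib_left)

lemma qform_eq_vinner_mvec: "qform n M x = vinner n x (mvec n M x)"
  by (simp add: qform_def vinner_def mvec_def sum_distrib_left mult_ac)

lemma qform_midm: "qform n midm x = vnorm n x ^ 2"
  by (simp add: qform_eq_vinner_mvec vnorm_power2 vinner_def mvec_midm)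

lemma qform_mmul: "qform n (mmul n A B) x = vinner n (mvec n (mtr A) x) (mvec n B x)"
proof -
  have "qform n (mmul n A B) x = (\<Sum>i<n. \<Sum>j<n. \<Sum>k<n. (A i k * x i) * (B k j * x j))"
    by (simp add: qform_def mmul_def sum_distrib_left sum_distrib_right mult_ac)
  also have "\<dots> = (\<Sum>k<n. \<Sum>i<n. \<Sum>j<n. (A i k * x i) * (B k j * x j))"
    by (subst sum.swap, rule sum.cong[OF refl], rule sum.swap)
  also have "\<dots> = vinner n (mvec n (mtr A) x) (mvec n B x)"
    by (simp add: vinner_def mvec_def mtr_def sum_product)
  finally show ?thesis .
qed

lemma qform_lyapunov:
  assumes "msymmetric n P"
  shows "qform n (madd (mmul n P A) (mmul n (mtr A) P)) x = 2 * vinner n (mvec n A x) (mvec n P x)"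
proof -
  have "vinner n (mvec n (mtr P) x) (mvec n A x) = vinner n (mvec n A x) (mvec n P x)"
    using assms by (simp add: vinner_def mvec_mtr_symmetric mult.commute)
  moreover have "mtr (mtr A) = A" by (simp add: mtr_def)
  ultimately show ?thesis by (simp add: qform_madd qform_mmul)
qed

lemma msymmetric_lyapunov:
  assumes "msymmetric n P"
  shows "msymmetric n (madd (mmul n P A) (mmul n (mtr A) P))"
  unfolding msymmetric_def
proof (intro allI impI)
  fix i j assume "i < n" "j < n"
  then have "mmul n P A i j = mmul n (mtr A) P j i" "mmul n (mtr A) P i j = mmul n P A j i"
    using assms unfolding mmul_def mtr_def msymmetric_def
    by (auto intro!: sum.cong simp: mult.commute)
  then show "madd (mmul n P A) (mmul n (mtr A) P) i j = madd (mmul n P A) (mmul n (mtr A) P) j i"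
    by (simp add: madd_def)
qed

lemma msymmetric_mscale_midm: "msymmetric n (mscale c midm)"
  by (simp add: msymmetric_def mscale_def midm_def)

lemma loewner_le_mscale_midm_left:
  "loewner_le n (mscale c midm) S \<longleftrightarrow> msymmetric n S \<and> (\<forall>x. c * vnorm n x ^ 2 \<le> qform n S x)"
  by (simp add: loewner_le_def msymmetric_mscale_midm qform_msub qform_mscale qform_midm)

lemma loewner_le_mscale_midm_right:
  "loewner_le n S (mscale c midm) \<longleftrightarrow> msymmetric n S \<and> (\<forall>x. qform n S x \<le> c * vnorm n x ^ 2)"
  by (simp add: loewner_le_def msymmetric_mscale_midm qform_msub qform_mscale qform_midm)

lemma vinner_le_vnorm_mult: "vinner n x y \<le> vnorm n x * vnorm n y"
proof -
  have "vinner n x y \<le> (\<Sum>i<n. \<bar>x i\<bar> * \<bar>y i\<bar>)"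
    unfolding vinner_def by (rule sum_mono) (simp flip: abs_mult)
  also have "\<dots> \<le> vnorm n x * vnorm n y"
    unfolding vnorm_eq_L2_set by (rule L2_set_mult_ineq)
  finally show ?thesis .
qed

lemma opnorm_bdd_above: "bdd_above {vnorm n (mvec n A x) | x. vnorm n x \<le> 1}"
proof (rule bdd_aboveI)
  fix v assume "v \<in> {vnorm n (mvec n A x) | x. vnorm n x \<le> 1}"
  then obtain x where x: "vnorm n x \<le> 1" and v: "v = vnorm n (mvec n A x)" by blast
  have "\<bar>x j\<bar> \<le> 1" if "j < n" for j
  proof -
    have "\<bar>x j\<bar> \<le> L2_set (\<lambda>i. \<bar>x i\<bar>) {..<n}"
      using that by (intro member_le_L2_set) auto
    also have "\<dots> = vnorm n x" by (simp add: vnorm_eq_L2_set L2_set_def)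
    finally show ?thesis using x by simp
  qed
  then have "\<bar>mvec n A x i\<bar> \<le> (\<Sum>j<n. \<bar>A i j\<bar>)" for i
    unfolding mvec_def
    by (intro order_trans[OF sum_abs] sum_mono) (simp add: abs_mult mult_left_le)
  then have "vnorm n (mvec n A x) \<le> (\<Sum>i<n. \<Sum>j<n. \<bar>A i j\<bar>)"
    unfolding vnorm_eq_L2_set by (intro order_trans[OF L2_set_le_sum_abs] sum_mono)
  then show "v \<le> (\<Sum>i<n. \<Sum>j<n. \<bar>A i j\<bar>)" using v by simp
qed

lemma vnorm_mvec_le: "vnorm n (mvec n A x) \<le> opnorm n A * vnorm n x"
proof (cases "vnorm n x = 0")
  case True
  then have "\<forall>j<n. x j = 0" by (simp add: vnorm_eq_L2_set L2_set_eq_0_iff)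
  then have "vnorm n (mvec n A x) = 0" by (simp add: vnorm_def mvec_def)
  then show ?thesis using True by simp
next
  case False
  define c where "c = vnorm n x"
  have "c > 0" using False vnorm_nonneg[of n x] by (simp add: c_def)
  define x' where "x' = (\<lambda>j. (1 / c) * x j)"
  have "vnorm n x' = 1"
    using \<open>c > 0\<close> by (simp only: x'_def vnorm_scale) (simp add: c_def)
  then have "vnorm n (mvec n A x') \<le> opnorm n A"
    unfolding opnorm_def by (intro cSup_upper[OF _ opnorm_bdd_above]) auto
  moreover have "mvec n A x' = (\<lambda>i. (1 / c) * mvec n A x i)"
    by (simp add: x'_def mvec_def sum_distrib_left mult_ac)
  ultimately have "vnorm n (mvec n A x) / c \<le> opnorm n A"
    using \<open>c > 0\<close> by (simp only: vnorm_scale) simp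
  then show ?thesis using \<open>c > 0\<close> by (simp add: c_def pos_divide_le_eq)
qed

lemma vinner_perturbation_le:
  fixes L1 L2 c1 c2 c3 :: real
  assumes "opnorm n A \<le> L1" "opnorm n B \<le> L2" "0 \<le> c1" "0 \<le> c2" "0 \<le> c3"
  shows "vinner n (\<lambda>s. mvec n A x2 s + mvec n B x3 s) (\<lambda>s. c1 * x1 s + c2 * x2 s + c3 * x3 s)
    \<le> (L1 * vnorm n x2 + L2 * vnorm n x3) * (c1 * vnorm n x1 + c2 * vnorm n x2 + c3 * vnorm n x3)"
proof -
  have Ax_le: "vnorm n (\<lambda>s. mvec n A x2 s + mvec n B x3 s) \<le> L1 * vnorm n x2 + L2 * vnorm n x3"
  proof -
    have "vnorm n (\<lambda>s. mvec n A x2 s + mvec n B x3 s) \<le> opnorm n A * vnorm n x2 + opnorm n B * vnorm n x3"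
      by (intro order_trans[OF vnorm_add_le] add_mono vnorm_mvec_le)
    also have "\<dots> \<le> L1 * vnorm n x2 + L2 * vnorm n x3"
      using assms(1,2) by (intro add_mono mult_right_mono vnorm_nonneg)
    finally show ?thesis .
  qed
  have y_le: "vnorm n (\<lambda>s. c1 * x1 s + c2 * x2 s + c3 * x3 s)
      \<le> c1 * vnorm n x1 + c2 * vnorm n x2 + c3 * vnorm n x3"
  proof -
    have "vnorm n (\<lambda>s. c1 * x1 s + c2 * x2 s + c3 * x3 s)
        \<le> vnorm n (\<lambda>s. c1 * x1 s) + vnorm n (\<lambda>s. c2 * x2 s) + vnorm n (\<lambda>s. c3 * x3 s)"
      by (intro order_trans[OF vnorm_add_le] add_right_mono vnorm_add_le)
    then show ?thesis using assms(3-5) by (simp add: vnorm_scale)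
  qed
  have "vinner n (\<lambda>s. mvec n A x2 s + mvec n B x3 s) (\<lambda>s. c1 * x1 s + c2 * x2 s + c3 * x3 s)
      \<le> vnorm n (\<lambda>s. mvec n A x2 s + mvec n B x3 s) * vnorm n (\<lambda>s. c1 * x1 s + c2 * x2 s + c3 * x3 s)"
    by (rule vinner_le_vnorm_mult)
  also have "\<dots> \<le> (L1 * vnorm n x2 + L2 * vnorm n x3) * (c1 * vnorm n x1 + c2 * vnorm n x2 + c3 * vnorm n x3)"
    using Ax_le y_le by (intro mult_mono vnorm_nonneg order_trans[OF vnorm_nonneg Ax_le])
  finally show ?thesis .
qed

lemma sum_lessThan_add:
  "(\<Sum>i<m + k. f i) = (\<Sum>i<m. f i) + (\<Sum>i<k. f (m + i))" for k :: nat
  by (induction k) (simp_all add: add.assoc)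

lemma sum_lessThan_3_mult:
  "(\<Sum>i<3 * n. f i) = (\<Sum>i<n. f i) + (\<Sum>i<n. f (n + i)) + (\<Sum>i<n. f (2 * n + i))" for n :: nat
proof -
  have "3 * n = n + n + n" by simp
  then show ?thesis by (simp only: sum_lessThan_add) (simp add: add.assoc mult_2)
qed

lemma lessThan_3_mult_cases:
  fixes i n :: nat
  assumes "i < 3 * n"
  obtains r where "r < n" "i = r \<or> i = n + r \<or> i = 2 * n + r"
proof
  show "i mod n < n" using assms by simp
  have "i div n < 3" using assms by (auto intro: less_mult_imp_div_less)
  then have "i div n = 0 \<or> i div n = 1 \<or> i div n = 2" by auto
  moreover have "i = i div n * n + i mod n" by simp
  ultimately show "i = i mod n \<or> i = n + i mod n \<or> i = 2 * n + i mod n"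
    by (metis add_0 mult_1 mult_zero_left)
qed

lemma vnorm_3_mult:
  "vnorm (3 * n) z ^ 2 = vnorm n z ^ 2 + vnorm n (\<lambda>s. z (n + s)) ^ 2 + vnorm n (\<lambda>s. z (2 * n + s)) ^ 2"
  by (simp add: vnorm_power2 vinner_def sum_lessThan_3_mult)

lemma block_index_less:
  fixes k n r :: nat
  assumes "r < n" "k < 3"
  shows "k * n + r < 3 * n"
proof -
  have "k * n + r < Suc k * n" using assms(1) by simp
  also have "\<dots> \<le> 3 * n" using assms(2) by (intro mult_le_mono1) simp
  finally show ?thesis .
qed

lemma block3_entry:
  assumes "r < n" "s < n" "k < 3" "l < 3"
  shows "block3 n B (k * n + r) (l * n + s) = (B ! k ! l) r s"
  using assms block_index_less[of r n k] block_index_less[of s n l] by (simp add: block3_def)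

lemma mvec_block3:
  assumes "r < n" "k < 3"
  shows "mvec (3 * n) (block3 n B) z (k * n + r) =
    mvec n (B ! k ! 0) z r + mvec n (B ! k ! 1) (\<lambda>s. z (n + s)) r
    + mvec n (B ! k ! 2) (\<lambda>s. z (2 * n + s)) r"
  unfolding mvec_def sum_lessThan_3_mult
  using assms block3_entry[of r n _ k 0 B] block3_entry[of r n _ k 1 B] block3_entry[of r n _ k 2 B]
  by (simp add: sum.distrib)

lemma binary_quadratic_form_pos:
  fixes p q r x y :: real
  assumes "0 < p" "q\<^sup>2 < p * r" "x \<noteq> 0 \<or> y \<noteq> 0"
  shows "0 < p * x\<^sup>2 + 2 * q * x * y + r * y\<^sup>2"
proof -
  have "p * (p * x\<^sup>2 + 2 * q * x * y + r * y\<^sup>2) = (p * x + q * y)\<^sup>2 + (p * r - q\<^sup>2) * y\<^sup>2"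
    by (simp add: algebra_simps power2_eq_square)
  also have "\<dots> > 0"
  proof (cases "y = 0")
    case True
    then show ?thesis using assms by simp
  next
    case False
    then show ?thesis using assms by (intro add_nonneg_pos) simp_all
  qed
  finally show ?thesis using \<open>0 < p\<close> by (simp add: zero_less_mult_iff)
qed

lemma Pmat_schur_form_pos:
  fixes s kp ki kd x1 x2 :: real
  assumes "0 < kp" "0 < ki" "0 < kd" "2 * ki * kd < kp\<^sup>2" "kp < s * kd"
    and "x1 \<noteq> 0 \<or> x2 \<noteq> 0"
  shows "0 < ki * (2 * s * kp - ki) * x1\<^sup>2 + 2 * (ki * (2 * s * kd - kp)) * x1 * x2
    + (2 * s * kp * kd - ki * kd - kp\<^sup>2) * x2\<^sup>2"
proof (rule binary_quadratic_form_pos[OF _ _ assms(6)])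
  have "4 * ki * kd < 2 * kp\<^sup>2" using assms(4) by (simp add: mult_ac)
  also have "\<dots> < 2 * s * kp * kd" using assms(1,5) by (simp add: power2_eq_square)
  finally have "ki < 2 * s * kp" using assms(2,3) by (simp add: mult_ac)
  then show "0 < ki * (2 * s * kp - ki)" using assms(2) by simp
  have "0 < s" using assms(1,3,5) by (smt (verit) mult_nonpos_nonneg)
  have "(2 * s * kp\<^sup>2) * kp < (2 * s * kp\<^sup>2) * (s * kd)"
    using assms(1,5) \<open>0 < s\<close> by (intro mult_strict_left_mono) simp_all
  also have "\<dots> = (2 * s\<^sup>2 * kd) * kp\<^sup>2" by (simp add: power2_eq_square)
  also have "\<dots> < (2 * s\<^sup>2 * kd) * (2 * (kp\<^sup>2 - ki * kd))"
    using assms(3,4) \<open>0 < s\<close> by (intro mult_strict_left_mono) (simp_all add: mult_ac)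
  finally have "2 * kp ^ 3 * s < 4 * s\<^sup>2 * kd * (kp\<^sup>2 - ki * kd)"
    by (simp add: algebra_simps power3_eq_cube power2_eq_square)
  moreover have "0 < ki\<^sup>2 * kd" using assms(2,3) by simp
  ultimately have "0 < 4 * s\<^sup>2 * kd * (kp\<^sup>2 - ki * kd) - 2 * kp ^ 3 * s + ki\<^sup>2 * kd"
    by linarith
  with \<open>0 < ki\<close> have "0 < ki * (4 * s\<^sup>2 * kd * (kp\<^sup>2 - ki * kd) - 2 * kp ^ 3 * s + ki\<^sup>2 * kd)"
    by simp
  also have "\<dots> = ki * (2 * s * kp - ki) * (2 * s * kp * kd - ki * kd - kp\<^sup>2)
      - (ki * (2 * s * kd - kp))\<^sup>2"
    by (simp add: algebra_simps power2_eq_square power3_eq_cube)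
  finally show "(ki * (2 * s * kd - kp))\<^sup>2 < ki * (2 * s * kp - ki) * (2 * s * kp * kd - ki * kd - kp\<^sup>2)"
    by simp
qed

lemma Pmat_block_form_pos:
  fixes bl kp ki kd x1 x2 x3 :: real
  assumes "0 < kp" "0 < ki" "0 < kd" "2 * ki * kd < kp\<^sup>2" "kp < bl * kd\<^sup>2"
    and "x1 \<noteq> 0 \<or> x2 \<noteq> 0 \<or> x3 \<noteq> 0"
  shows "0 < x1 * (2*ki*kp*bl * x1 + 2*ki*kd*bl * x2 + ki * x3)
    + x2 * (2*ki*kd*bl * x1 + (2*kp*kd*bl - ki) * x2 + kp * x3)
    + x3 * (ki * x1 + kp * x2 + kd * x3)" (is "0 < ?F")
proof (cases "x1 = 0 \<and> x2 = 0")
  case True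
  then have "?F = kd * x3\<^sup>2" by (simp add: power2_eq_square)
  also have "\<dots> > 0" using True assms(3,6) by simp
  finally show ?thesis .
next
  case False
  define s where "s = bl * kd"
  have "kp < s * kd" using assms(5) by (simp add: s_def power2_eq_square mult.assoc)
  have "kd * ?F = (ki * x1 + kp * x2 + kd * x3)\<^sup>2
      + (ki * (2 * s * kp - ki) * x1\<^sup>2 + 2 * (ki * (2 * s * kd - kp)) * x1 * x2
        + (2 * s * kp * kd - ki * kd - kp\<^sup>2) * x2\<^sup>2)"
    by (simp add: s_def algebra_simps power2_eq_square)
  also have "\<dots> > 0"
    using Pmat_schur_form_pos[OF assms(1-4) \<open>kp < s * kd\<close>] False by (simp add: add_nonneg_pos)
  finally show ?thesis using assms(3) by (simp add: zero_less_mult_iff)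
qed

lemma cross_term_le:
  fixes L1 L2 kp ki kd u1 u2 u3 :: real
  assumes "0 \<le> L1" "0 \<le> L2" "0 < kp" "0 < kd"
  shows "(L1 * u2 + L2 * u3) * (ki * u1 + kp * u2 + kd * u3)
    \<le> ki\<^sup>2 * (L1 / (2 * kd) + L2 / (2 * kp)) * u1\<^sup>2 + (L1 + L2) * (kp + kd) * (u2\<^sup>2 + u3\<^sup>2)"
proof -
  have "ki\<^sup>2 * (L1 / (2 * kd) + L2 / (2 * kp)) * u1\<^sup>2 + (L1 + L2) * (kp + kd) * (u2\<^sup>2 + u3\<^sup>2)
      - (L1 * u2 + L2 * u3) * (ki * u1 + kp * u2 + kd * u3)
    = L1 / (2 * kd) * (ki * u1 - kd * u2)\<^sup>2 + L2 / (2 * kp) * (ki * u1 - kp * u3)\<^sup>2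
      + (L1 * kd + L2 * kp) / 2 * (u2 - u3)\<^sup>2 + L2 * (kd + kp / 2) * u2\<^sup>2 + L1 * (kp + kd / 2) * u3\<^sup>2"
    using assms by (simp add: field_simps power2_eq_square)
  also have "\<dots> \<ge> 0" using assms by (intro add_nonneg_nonneg mult_nonneg_nonneg) simp_all
  finally show ?thesis by simp
qed

lemma msymmetric_Pmat: "msymmetric (3 * n) (Pmat n kp ki kd bl)"
  unfolding msymmetric_def
proof (intro allI impI)
  fix i j assume "i < 3 * n" "j < 3 * n"
  moreover have "i div n < 3" "j div n < 3"
    using calculation by (auto intro: less_mult_imp_div_less)
  ultimately show "Pmat n kp ki kd bl i j = Pmat n kp ki kd bl j i"
    unfolding Pmat_def block3_def
    by (auto simp: mscale_def midm_def less_Suc_eq numeral_3_eq_3)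
qed

lemma mvec_Pmat:
  assumes "r < n"
  shows "mvec (3 * n) (Pmat n kp ki kd bl) z r
      = 2*ki*kp*bl * z r + 2*ki*kd*bl * z (n + r) + ki * z (2 * n + r)"
    and "mvec (3 * n) (Pmat n kp ki kd bl) z (n + r)
      = 2*ki*kd*bl * z r + (2*kp*kd*bl - ki) * z (n + r) + kp * z (2 * n + r)"
    and "mvec (3 * n) (Pmat n kp ki kd bl) z (2 * n + r)
      = ki * z r + kp * z (n + r) + kd * z (2 * n + r)"
  using mvec_block3[OF assms, of 0] mvec_block3[OF assms, of 1] mvec_block3[OF assms, of 2] assms
  by (simp_all add: Pmat_def mvec_mscale mvec_midm)

lemma mvec_Amat:
  assumes "r < n"
  shows "mvec (3 * n) (Amat n kp ki kd a b \<theta>) z r = z (n + r)"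
    and "mvec (3 * n) (Amat n kp ki kd a b \<theta>) z (n + r) = z (2 * n + r)"
    and "mvec (3 * n) (Amat n kp ki kd a b \<theta>) z (2 * n + r)
      = mvec n a (\<lambda>s. z (n + s)) r + mvec n b (\<lambda>s. z (2 * n + s)) r
        - mvec n \<theta> (\<lambda>s. ki * z s + kp * z (n + s) + kd * z (2 * n + s)) r"
  using mvec_block3[OF assms, of 0] mvec_block3[OF assms, of 1] mvec_block3[OF assms, of 2] assms
  by (simp_all add: Amat_def mvec_mzero mvec_midm mvec_mscale mvec_msub)
    (simp add: mvec_def algebra_simps sum.distrib sum_subtractf sum_distrib_left)

lemma pos_def_Pmat:
  assumes "0 < kp" "0 < ki" "0 < kd" "2 * ki * kd < kp\<^sup>2" "kp < bl * kd\<^sup>2"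
  shows "pos_def (3 * n) (Pmat n kp ki kd bl)"
  unfolding pos_def_def
proof (intro conjI allI impI msymmetric_Pmat)
  fix z :: rvec assume "\<exists>i<3 * n. z i \<noteq> 0"
  then obtain r where r: "r < n" "z r \<noteq> 0 \<or> z (n + r) \<noteq> 0 \<or> z (2 * n + r) \<noteq> 0"
    by (metis lessThan_3_mult_cases)
  define F where "F x1 x2 x3 = x1 * (2*ki*kp*bl * x1 + 2*ki*kd*bl * x2 + ki * x3)
    + x2 * (2*ki*kd*bl * x1 + (2*kp*kd*bl - ki) * x2 + kp * x3)
    + x3 * (ki * x1 + kp * x2 + kd * x3)" for x1 x2 x3
  have F_nonneg: "0 \<le> F x1 x2 x3" for x1 x2 x3
    using Pmat_block_form_pos[OF assms, of x1 x2 x3]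
    by (cases "x1 = 0 \<and> x2 = 0 \<and> x3 = 0") (auto simp: F_def)
  have "qform (3 * n) (Pmat n kp ki kd bl) z = (\<Sum>s<n. F (z s) (z (n + s)) (z (2 * n + s)))"
    unfolding qform_eq_vinner_mvec vinner_def sum_lessThan_3_mult sum.distrib[symmetric]
    by (rule sum.cong) (simp_all add: mvec_Pmat F_def)
  also have "\<dots> > 0"
  proof (rule sum_pos2)
    show "0 < F (z r) (z (n + r)) (z (2 * n + r))"
      unfolding F_def using Pmat_block_form_pos[OF assms r(2)] .
  qed (use r(1) F_nonneg in auto)
  finally show "0 < qform (3 * n) (Pmat n kp ki kd bl) z" .
qed

lemma qform_lyapunov_Pmat_Amat:
  fixes n :: nat and z :: rvec and kp ki kd :: real
  defines "x2 \<equiv> \<lambda>s. z (n + s)" and "x3 \<equiv> \<lambda>s. z (2 * n + s)"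
    and "y \<equiv> \<lambda>s. ki * z s + kp * z (n + s) + kd * z (2 * n + s)"
  shows "qform (3 * n)
      (madd (mmul (3 * n) (Pmat n kp ki kd bl) (Amat n kp ki kd a b \<theta>))
            (mmul (3 * n) (mtr (Amat n kp ki kd a b \<theta>)) (Pmat n kp ki kd bl))) z
    = 2 * (vinner n (\<lambda>s. mvec n a x2 s + mvec n b x3 s) y - (vinner n y (mvec n \<theta> y) - bl * vnorm n y ^ 2)
      - bl * ki\<^sup>2 * vnorm n z ^ 2 - bl * (kp\<^sup>2 - 2 * ki * kd) * vnorm n x2 ^ 2
      - (bl * kd\<^sup>2 - kp) * vnorm n x3 ^ 2)"
proof -
  have "vinner (3 * n) (mvec (3 * n) (Amat n kp ki kd a b \<theta>) z) (mvec (3 * n) (Pmat n kp ki kd bl) z)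
    = (\<Sum>s<n. (mvec n a x2 s + mvec n b x3 s) * y s - y s * mvec n \<theta> y s + bl * (y s * y s)
        - bl * ki\<^sup>2 * (z s * z s) - bl * (kp\<^sup>2 - 2 * ki * kd) * (x2 s * x2 s)
        - (bl * kd\<^sup>2 - kp) * (x3 s * x3 s))"
    unfolding vinner_def sum_lessThan_3_mult sum.distrib[symmetric]
    by (rule sum.cong[OF refl], simp only: lessThan_iff mvec_Pmat mvec_Amat)
      (simp add: x2_def x3_def y_def algebra_simps power2_eq_square)
  then show ?thesis
    by (simp add: qform_lyapunov msymmetric_Pmat vnorm_power2 vinner_def sum.distrib sum_subtractf
        sum_distrib_left)
qed

lemma qform_lyapunov_Pmat_Amat_le:
  fixes n :: nat and z :: rvec and L1 L2 bl kp ki kd :: real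
  defines "x2 \<equiv> \<lambda>s. z (n + s)" and "x3 \<equiv> \<lambda>s. z (2 * n + s)"
  assumes a_le: "opnorm n a \<le> L1" and b_le: "opnorm n b \<le> L2"
    and \<theta>_ge: "loewner_le n (mscale bl midm) (msym \<theta>)"
    and "0 \<le> L1" "0 \<le> L2" "0 < kp" "0 \<le> ki" "0 < kd"
  shows "qform (3 * n)
      (madd (mmul (3 * n) (Pmat n kp ki kd bl) (Amat n kp ki kd a b \<theta>))
            (mmul (3 * n) (mtr (Amat n kp ki kd a b \<theta>)) (Pmat n kp ki kd bl))) z
    \<le> - 2 * ((bl - L1 / (2 * kd) - L2 / (2 * kp)) * ki\<^sup>2 * vnorm n z ^ 2
      + (bl * (kp\<^sup>2 - 2 * ki * kd) - (L1 + L2) * (kp + kd)) * vnorm n x2 ^ 2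
      + (bl * kd\<^sup>2 - kp - (L1 + L2) * (kp + kd)) * vnorm n x3 ^ 2)"
proof -
  define y where "y = (\<lambda>s. ki * z s + kp * x2 s + kd * x3 s)"
  have "vinner n (\<lambda>s. mvec n a x2 s + mvec n b x3 s) y
      \<le> (L1 * vnorm n x2 + L2 * vnorm n x3) * (ki * vnorm n z + kp * vnorm n x2 + kd * vnorm n x3)"
    unfolding y_def using a_le b_le \<open>0 \<le> ki\<close> \<open>0 < kp\<close> \<open>0 < kd\<close>
    by (intro vinner_perturbation_le) simp_all
  also have "\<dots> \<le> ki\<^sup>2 * (L1 / (2 * kd) + L2 / (2 * kp)) * vnorm n z ^ 2
      + (L1 + L2) * (kp + kd) * (vnorm n x2 ^ 2 + vnorm n x3 ^ 2)"
    using \<open>0 \<le> L1\<close> \<open>0 \<le> L2\<close> \<open>0 < kp\<close> \<open>0 < kd\<close> by (rule cross_term_le)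
  finally have perturbation: "vinner n (\<lambda>s. mvec n a x2 s + mvec n b x3 s) y
      \<le> ki\<^sup>2 * (L1 / (2 * kd) + L2 / (2 * kp)) * vnorm n z ^ 2
        + (L1 + L2) * (kp + kd) * (vnorm n x2 ^ 2 + vnorm n x3 ^ 2)" .
  have "bl * vnorm n y ^ 2 \<le> qform n \<theta> y"
    using \<theta>_ge by (simp add: loewner_le_mscale_midm_left qform_msym)
  then have "bl * vnorm n y ^ 2 \<le> vinner n y (mvec n \<theta> y)"
    by (simp only: qform_eq_vinner_mvec)
  with perturbation show ?thesis
    unfolding qform_lyapunov_Pmat_Amat x2_def x3_def y_def
    by (simp add: algebra_simps)
qed

lemma loewner_lyapunov_Pmat_Amat:
  fixes L1 L2 bl kp ki kd m :: real
  assumes "opnorm n a \<le> L1" "opnorm n b \<le> L2" "loewner_le n (mscale bl midm) (msym \<theta>)"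
    and "0 \<le> L1" "0 \<le> L2" "0 < kp" "0 \<le> ki" "0 < kd"
    and "m \<le> (bl - L1 / (2 * kd) - L2 / (2 * kp)) * ki\<^sup>2"
    and "m \<le> bl * (kp\<^sup>2 - 2 * ki * kd) - (L1 + L2) * (kp + kd)"
    and "m \<le> bl * kd\<^sup>2 - kp - (L1 + L2) * (kp + kd)"
  shows "loewner_le (3 * n)
      (madd (mmul (3 * n) (Pmat n kp ki kd bl) (Amat n kp ki kd a b \<theta>))
            (mmul (3 * n) (mtr (Amat n kp ki kd a b \<theta>)) (Pmat n kp ki kd bl)))
      (mscale (- (2 * m)) midm)"
  unfolding loewner_le_mscale_midm_right
proof (intro conjI allI msymmetric_lyapunov msymmetric_Pmat)
  fix z :: rvec
  define c1 c2 c3 where "c1 = (bl - L1 / (2 * kd) - L2 / (2 * kp)) * ki\<^sup>2"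
    and "c2 = bl * (kp\<^sup>2 - 2 * ki * kd) - (L1 + L2) * (kp + kd)"
    and "c3 = bl * kd\<^sup>2 - kp - (L1 + L2) * (kp + kd)"
  define u1 u2 u3 where "u1 = vnorm n z" and "u2 = vnorm n (\<lambda>s. z (n + s))"
    and "u3 = vnorm n (\<lambda>s. z (2 * n + s))"
  let ?M = "madd (mmul (3 * n) (Pmat n kp ki kd bl) (Amat n kp ki kd a b \<theta>))
            (mmul (3 * n) (mtr (Amat n kp ki kd a b \<theta>)) (Pmat n kp ki kd bl))"
  have "qform (3 * n) ?M z \<le> - 2 * (c1 * u1\<^sup>2 + c2 * u2\<^sup>2 + c3 * u3\<^sup>2)"
    unfolding c1_def c2_def c3_def u1_def u2_def u3_def
    by (rule qform_lyapunov_Pmat_Amat_le[OF assms(1-8)])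
  moreover have "m * u1\<^sup>2 \<le> c1 * u1\<^sup>2" "m * u2\<^sup>2 \<le> c2 * u2\<^sup>2" "m * u3\<^sup>2 \<le> c3 * u3\<^sup>2"
    using assms(9-11) by (simp_all add: c1_def c2_def c3_def mult_right_mono)
  ultimately have "qform (3 * n) ?M z \<le> - (2 * m) * (u1\<^sup>2 + u2\<^sup>2 + u3\<^sup>2)"
    by (simp add: algebra_simps)
  then show "qform (3 * n) ?M z \<le> - (2 * m) * vnorm (3 * n) z ^ 2"
    by (simp only: vnorm_3_mult u1_def u2_def u3_def)
qed

lemma gain_margins:
  fixes L1 L2 bl kp ki kd :: real
  assumes "0 < L1" "0 < L2" "0 < bl" "0 < kp" "0 < ki" "0 < kd"
    and "kp\<^sup>2 > 2 * ki * kd + kbar L1 L2 bl kp kd"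
    and "kd\<^sup>2 > kp / bl + kbar L1 L2 bl kp kd"
  shows "2 * ki * kd < kp\<^sup>2" "kp < bl * kd\<^sup>2"
    and "0 < (bl - L1 / (2 * kd) - L2 / (2 * kp)) * ki\<^sup>2"
    and "0 < bl * (kp\<^sup>2 - 2 * ki * kd) - (L1 + L2) * (kp + kd)"
    and "0 < bl * kd\<^sup>2 - kp - (L1 + L2) * (kp + kd)"
proof -
  define K where "K = (L1 + L2) * (kp + kd)"
  have "0 < K" using assms(1-6) by (simp add: K_def)
  have kbar_eq: "kbar L1 L2 bl kp kd = K / bl" by (simp add: kbar_def K_def)
  have "K / bl < kp\<^sup>2 - 2 * ki * kd" "kp / bl + K / bl < kd\<^sup>2"
    using assms(7,8) by (simp_all add: kbar_eq)
  then have margin2: "K < bl * (kp\<^sup>2 - 2 * ki * kd)" and margin3: "K < bl * kd\<^sup>2 - kp"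
    using assms(3) by (simp_all add: field_simps)
  then show "0 < bl * (kp\<^sup>2 - 2 * ki * kd) - (L1 + L2) * (kp + kd)"
    "0 < bl * kd\<^sup>2 - kp - (L1 + L2) * (kp + kd)"
    by (simp_all add: K_def)
  have "0 < bl * (kp\<^sup>2 - 2 * ki * kd)" using margin2 \<open>0 < K\<close> by linarith
  then show "2 * ki * kd < kp\<^sup>2" using assms(3) by (simp add: zero_less_mult_iff)
  show "kp < bl * kd\<^sup>2" using margin3 \<open>0 < K\<close> by simp
  have "L1 * kd < K" "L2 * kp < K" using assms(1-6) by (simp_all add: K_def algebra_simps add_pos_pos)
  moreover have "bl * (kp\<^sup>2 - 2 * ki * kd) < bl * kp * kp" "bl * kd\<^sup>2 - kp < bl * kd * kd"
    using assms(3-6) by (simp_all add: power2_eq_square algebra_simps)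
  ultimately have "L1 * kd < bl * kd * kd" "L2 * kp < bl * kp * kp"
    using margin2 margin3 by linarith+
  then have "L1 / (2 * kd) < bl / 2" "L2 / (2 * kp) < bl / 2"
    using assms(4,6) by (simp_all add: field_simps)
  then show "0 < (bl - L1 / (2 * kd) - L2 / (2 * kp)) * ki\<^sup>2"
    using assms(5) by simp
qed

theorem proposition4p2:
  fixes L1 L2 bl kp ki kd :: real
  assumes "L1 > 0" "L2 > 0" "bl > 0" "kp > 0" "ki > 0" "kd > 0"
    and "kp^2 > 2*ki*kd + kbar L1 L2 bl kp kd"
    and "kd^2 > kp / bl + kbar L1 L2 bl kp kd"
  shows "(\<forall>n\<ge>1. pos_def (3*n) (Pmat n kp ki kd bl)) \<and>
    (\<exists>\<alpha>>0. \<forall>n\<ge>1. \<forall>a b \<theta>.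
       opnorm n a \<le> L1 \<longrightarrow> opnorm n b \<le> L2 \<longrightarrow>
       loewner_le n (mscale bl midm) (msym \<theta>) \<longrightarrow>
       loewner_le (3*n)
         (madd (mmul (3*n) (Pmat n kp ki kd bl) (Amat n kp ki kd a b \<theta>))
               (mmul (3*n) (mtr (Amat n kp ki kd a b \<theta>)) (Pmat n kp ki kd bl)))
         (mscale (- \<alpha>) midm))"
proof -
  note margins = gain_margins[OF assms]
  define m where "m = min ((bl - L1 / (2 * kd) - L2 / (2 * kp)) * ki\<^sup>2)
    (min (bl * (kp\<^sup>2 - 2 * ki * kd) - (L1 + L2) * (kp + kd)) (bl * kd\<^sup>2 - kp - (L1 + L2) * (kp + kd)))"
  have "0 < 2 * m" using margins(3-5) by (simp add: m_def)
  moreover have "pos_def (3 * n) (Pmat n kp ki kd bl)" for n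
    using assms(4-6) margins(1,2) by (rule pos_def_Pmat)
  moreover have "loewner_le (3 * n)
      (madd (mmul (3 * n) (Pmat n kp ki kd bl) (Amat n kp ki kd a b \<theta>))
            (mmul (3 * n) (mtr (Amat n kp ki kd a b \<theta>)) (Pmat n kp ki kd bl)))
      (mscale (- (2 * m)) midm)"
    if "opnorm n a \<le> L1" "opnorm n b \<le> L2" "loewner_le n (mscale bl midm) (msym \<theta>)" for n a b \<theta>
    by (rule loewner_lyapunov_Pmat_Amat[OF that]) (use assms in \<open>simp_all add: m_def\<close>)
  ultimately show ?thesis by blast
qed

end
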